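(* Any quantum oracle algorithm that solves $\mathsf{EL\text{-}LCS\text{-}RLE}$ with probability at least $2/3$ requires $\tilde\Omega(n)$ queries, where $n$ is the encoded length of the inputs.
   Context: A string $\tilde s$ has run-length encoding (RLE) $s=s[1]\cdots s[m]$, its sequence of maximal runs of identical characters, each run having character $C(s[i])$ and length $R(s[i])$; $|s|=m$ is the encoded length. The problem $\mathsf{EL\text{-}LCS\text{-}RLE}$: given quantum oracle access to two RLE strings $A$ and $B$ only through the unitaries $|i\rangle|c\rangle|r\rangle\mapsto|i\rangle|c\oplus C(S[i])\rangle|r\oplus R(S[i])\rangle$ for $S\in\{A,B\}$ (no prefix-sum oracle), compute $|s|$ for an RLE string $s$ such that $\tilde s$ is a longest common substring of $\tilde A$ and $\tilde B$. $\tilde\Omega(\cdot)$ hides polylogarithmic factors. *)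

theory Defs
  imports Complex_Main "HOL-Library.Sublist"
begin

text \<open>An RLE string is a list of runs (C(s[i]), R(s[i])), characters and run lengths
  being natural numbers. Valid w.r.t. a register width W: every run length is positive,
  characters and run lengths are below 2^W (so that they fit in the query operator's W-bit
  registers), and adjacent runs have different characters (runs are maximal).\<close>

type_synonym rle = "(nat \<times> nat) list"

definition valid_rle :: "nat \<Rightarrow> rle \<Rightarrow> bool" where
  "valid_rle W S \<longleftrightarrow>
     (\<forall>(c, r) \<in> set S. c < 2 ^ W \<and> 0 < r \<and> r < 2 ^ W) \<and>
     (\<forall>i. Suc i < length S \<longrightarrow> fst (S ! i) \<noteq> fst (S ! Suc i))"

definition decode :: "rle \<Rightarrow> nat list" where
  "decode S = concat (map (\<lambda>(c, r). replicate r c) S)"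

definition enc_length :: "nat list \<Rightarrow> nat" where
  "enc_length w = length (remdups_adj w)"

definition is_LCSubstr :: "nat list \<Rightarrow> nat list \<Rightarrow> nat list \<Rightarrow> bool" where
  "is_LCSubstr x y w \<longleftrightarrow> sublist w x \<and> sublist w y \<and>
     (\<forall>v. sublist v x \<and> sublist v y \<longrightarrow> length v \<le> length w)"

definition el_lcs_answers :: "rle \<Rightarrow> rle \<Rightarrow> nat set" where
  "el_lcs_answers A B = {enc_length w | w. is_LCSubstr (decode A) (decode B) w}"

text \<open>Hilbert space: computational basis |i,c,r,w> with index register i < n,
  character register c < 2^W, run-length register r < 2^W and workspace w < K. States are functions
  nat => complex (only indices below the dimension matter), matrices are
  nat => nat => complex.\<close>

definition qdim :: "nat \<Rightarrow> nat \<Rightarrow> nat \<Rightarrow> nat" where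
  "qdim n W K = n * 2 ^ W * 2 ^ W * K"

definition enc_basis :: "nat \<Rightarrow> nat \<Rightarrow> nat \<Rightarrow> nat \<Rightarrow> nat \<Rightarrow> nat \<Rightarrow> nat" where
  "enc_basis n W i c r w = i + n * (c + 2 ^ W * (r + 2 ^ W * w))"

definition reg_i :: "nat \<Rightarrow> nat \<Rightarrow> nat \<Rightarrow> nat" where "reg_i n W j = j mod n"
definition reg_c :: "nat \<Rightarrow> nat \<Rightarrow> nat \<Rightarrow> nat" where "reg_c n W j = (j div n) mod 2 ^ W"
definition reg_r :: "nat \<Rightarrow> nat \<Rightarrow> nat \<Rightarrow> nat" where
  "reg_r n W j = (j div (n * 2 ^ W)) mod 2 ^ W"
definition reg_w :: "nat \<Rightarrow> nat \<Rightarrow> nat \<Rightarrow> nat" where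
  "reg_w n W j = j div (n * 2 ^ W * 2 ^ W)"

type_synonym qstate = "nat \<Rightarrow> complex"
type_synonym qmat = "nat \<Rightarrow> nat \<Rightarrow> complex"

definition mat_apply :: "nat \<Rightarrow> qmat \<Rightarrow> qstate \<Rightarrow> qstate" where
  "mat_apply D U \<psi> = (\<lambda>i. if i < D then (\<Sum>j<D. U i j * \<psi> j) else 0)"

definition unitary :: "nat \<Rightarrow> qmat \<Rightarrow> bool" where
  "unitary D U \<longleftrightarrow>
     (\<forall>i<D. \<forall>j<D. (\<Sum>k<D. cnj (U k i) * U k j) = (if i = j then 1 else 0))"

text \<open>The query operator (oracle unitary) of an RLE string S (of encoded length n):
  |i>|c>|r>|w>  |->  |i>|c XOR C(S[i])>|r XOR R(S[i])>|w>  (0-based i).\<close>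
definition query_op :: "nat \<Rightarrow> nat \<Rightarrow> nat \<Rightarrow> rle \<Rightarrow> qmat" where
  "query_op n W K S = (\<lambda>j' j.
     if j' < qdim n W K \<and> j < qdim n W K \<and>
        j' = enc_basis n W (reg_i n W j)
               (Bit_Operations.xor (reg_c n W j) (fst (S ! reg_i n W j)))
               (Bit_Operations.xor (reg_r n W j) (snd (S ! reg_i n W j)))
               (reg_w n W j)
     then 1 else 0)"

text \<open>A T-query algorithm: workspace dimension K, unitaries U_0, ..., U_T, for each
  query t = 1..T a choice which string is queried (True = A, False = B), and a classical
  output function applied to the outcome of a final computational-basis measurement.\<close>
record qalg =
  alg_ws :: nat
  alg_T :: nat
  alg_U :: "nat \<Rightarrow> qmat"
  alg_choice :: "nat \<Rightarrow> bool"
  alg_out :: "nat \<Rightarrow> nat"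

definition wf_qalg :: "nat \<Rightarrow> nat \<Rightarrow> qalg \<Rightarrow> bool" where
  "wf_qalg n W Q \<longleftrightarrow> 1 \<le> alg_ws Q \<and>
     (\<forall>t \<le> alg_T Q. unitary (qdim n W (alg_ws Q)) (alg_U Q t))"

fun run_state :: "nat \<Rightarrow> nat \<Rightarrow> qalg \<Rightarrow> rle \<Rightarrow> rle \<Rightarrow> nat \<Rightarrow> qstate" where
  "run_state n W Q A B 0 =
     mat_apply (qdim n W (alg_ws Q)) (alg_U Q 0) (\<lambda>j. if j = 0 then 1 else 0)"
| "run_state n W Q A B (Suc t) =
     (let D = qdim n W (alg_ws Q) in
      mat_apply D (alg_U Q (Suc t))
        (mat_apply D (query_op n W (alg_ws Q) (if alg_choice Q (Suc t) then A else B))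
          (run_state n W Q A B t)))"

definition success_prob :: "nat \<Rightarrow> nat \<Rightarrow> qalg \<Rightarrow> rle \<Rightarrow> rle \<Rightarrow> real" where
  "success_prob n W Q A B =
     (\<Sum>j < qdim n W (alg_ws Q).
        if alg_out Q j \<in> el_lcs_answers A B
        then (cmod (run_state n W Q A B (alg_T Q) j))\<^sup>2 else 0)"

definition solves_EL_LCS_RLE :: "nat \<Rightarrow> nat \<Rightarrow> qalg \<Rightarrow> bool" where
  "solves_EL_LCS_RLE n W Q \<longleftrightarrow> wf_qalg n W Q \<and>
     (\<forall>A B. length A = n \<and> length B = n \<and> valid_rle W A \<and> valid_rle W B \<longrightarrow>
        success_prob n W Q A B \<ge> 2 / 3)"

end

theory Submission
  imports Defs
begin

text \<open>Adversary method, via a reduction from majority on \<open>p = 2k + 1\<close> bits. A set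
  \<open>z \<subseteq> {2..<p+2}\<close> is encoded by an alternating \<open>0/1\<close> block \<open>X\<^sub>z\<close> whose \<open>i\<close>-th run has length 3
  if \<open>i \<in> z\<close> and 1 otherwise, so \<open>|X\<^sub>z| = p + 2|z|\<close>. Both strings consist of a run of \<open>L = 4k + 2\<close>
  letters \<open>2\<close>, a separator (different in the two strings), \<open>X\<^sub>z\<close> and padding (disjoint in the two
  strings). Hence the longest common substring is the initial run, of encoded length 1, when
  \<open>|z| = k\<close>, and it is \<open>X\<^sub>z\<close>, of encoded length at least 2, when \<open>|z| = k + 1\<close>.

  The inputs for \<open>z\<close> and \<open>y = z \<union> {i}\<close> differ only in run \<open>i\<close>. Sum \<open>|\<langle>\<psi>\<^sub>z, \<psi>\<^sub>y\<rangle>|\<close> over all such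
  pairs. The sum starts at the number of pairs; one query lowers each term by at most the weight
  the two states put on index \<open>i\<close>, and since the pairs through a fixed set use distinct indices,
  the total loss per query is at most the number of sets. At the end every term is at most
  \<open>17/18\<close>, because the algorithm tells \<open>z\<close> from \<open>y\<close> with probability \<open>2/3\<close>. So
  \<open>T \<ge> (k + 1)/36 \<ge> n/144\<close>.\<close>

section \<open>States and unitaries\<close>

definition inner_prod :: "nat \<Rightarrow> qstate \<Rightarrow> qstate \<Rightarrow> complex" where
  "inner_prod D \<phi> \<psi> = (\<Sum>j<D. cnj (\<phi> j) * \<psi> j)"

definition norm2 :: "nat \<Rightarrow> qstate \<Rightarrow> real" where
  "norm2 D \<phi> = (\<Sum>j<D. (cmod (\<phi> j))\<^sup>2)"

lemma inner_prod_self: "inner_prod D \<phi> \<phi> = of_real (norm2 D \<phi>)"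
  unfolding inner_prod_def norm2_def of_real_sum of_real_power
  by (rule sum.cong) (simp_all add: complex_norm_square[symmetric] mult.commute)

lemma unitary_inner_prod:
  assumes "unitary D U"
  shows "inner_prod D (mat_apply D U \<phi>) (mat_apply D U \<psi>) = inner_prod D \<phi> \<psi>"
proof -
  have "inner_prod D (mat_apply D U \<phi>) (mat_apply D U \<psi>) =
        (\<Sum>i<D. \<Sum>k<D. \<Sum>l<D. (cnj (\<phi> k) * \<psi> l) * (cnj (U i k) * U i l))"
    by (simp add: inner_prod_def mat_apply_def sum_distrib_left sum_distrib_right mult_ac)
  also have "\<dots> = (\<Sum>k<D. \<Sum>l<D. (cnj (\<phi> k) * \<psi> l) * (\<Sum>i<D. cnj (U i k) * U i l))"
    by (subst sum.swap, rule sum.cong[OF refl], subst sum.swap) (simp add: sum_distrib_left)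
  also have "\<dots> = (\<Sum>k<D. \<Sum>l<D. (cnj (\<phi> k) * \<psi> l) * (if k = l then 1 else 0))"
    using assms by (simp add: unitary_def)
  also have "\<dots> = inner_prod D \<phi> \<psi>"
    by (simp add: inner_prod_def if_distrib cong: if_cong)
  finally show ?thesis .
qed

lemma unitary_norm2: "unitary D U \<Longrightarrow> norm2 D (mat_apply D U \<phi>) = norm2 D \<phi>"
  using unitary_inner_prod[of D U \<phi> \<phi>] by (simp add: inner_prod_self)

section \<open>Queries\<close>

lemma add_mult_less: "(i::nat) < n \<Longrightarrow> c < m \<Longrightarrow> i + n * c < n * m"
proof -
  assume "i < n" "c < m"
  then have "i + n * c < n * Suc c" by simp
  also have "\<dots> \<le> n * m" using \<open>c < m\<close> by (intro mult_le_mono2) simp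
  finally show ?thesis .
qed

lemma reg_enc_basis:
  assumes "i < n" "c < 2 ^ W" "r < 2 ^ W"
  shows "reg_i n W (enc_basis n W i c r w) = i"
    and "reg_c n W (enc_basis n W i c r w) = c"
    and "reg_r n W (enc_basis n W i c r w) = r"
    and "reg_w n W (enc_basis n W i c r w) = w"
proof -
  let ?e = "enc_basis n W i c r w"
  have d1: "?e div n = c + 2 ^ W * (r + 2 ^ W * w)"
    using assms by (simp add: enc_basis_def)
  then have d2: "?e div (n * 2 ^ W) = r + 2 ^ W * w"
    using assms by (simp add: div_mult2_eq div_less)
  then have "?e div (n * 2 ^ W * 2 ^ W) = w"
    using assms by (simp add: div_mult2_eq[of ?e "n * 2 ^ W"] div_less)
  then show "reg_w n W ?e = w" by (simp add: reg_w_def)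
  show "reg_i n W ?e = i" using assms by (simp add: reg_i_def enc_basis_def)
  show "reg_c n W ?e = c" using assms by (simp add: reg_c_def d1)
  show "reg_r n W ?e = r" using assms by (simp add: reg_r_def d2)
qed

lemma enc_basis_reg:
  assumes "0 < n"
  shows "enc_basis n W (reg_i n W j) (reg_c n W j) (reg_r n W j) (reg_w n W j) = j"
proof -
  have "j = j mod n + n * (j div n)" by simp
  also have "j div n = j div n mod 2 ^ W + 2 ^ W * (j div n div 2 ^ W)" by simp
  also have "j div n div 2 ^ W = j div n div 2 ^ W mod 2 ^ W + 2 ^ W * (j div n div 2 ^ W div 2 ^ W)"
    by simp
  finally show ?thesis
    by (simp add: enc_basis_def reg_i_def reg_c_def reg_r_def reg_w_def div_mult2_eq)
qed

lemma enc_basis_less_qdim: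
  assumes "i < n" "c < 2 ^ W" "r < 2 ^ W" "w < K"
  shows "enc_basis n W i c r w < qdim n W K"
  using assms unfolding enc_basis_def qdim_def
  by (metis add_mult_less mult.assoc)

lemma reg_less:
  assumes "0 < n"
  shows "reg_i n W j < n" and "reg_c n W j < 2 ^ W" and "reg_r n W j < 2 ^ W"
    and "j < qdim n W K \<Longrightarrow> reg_w n W j < K"
  using assms
  by (auto simp: reg_i_def reg_c_def reg_r_def reg_w_def qdim_def less_mult_imp_div_less mult_ac)

lemma xor_less_two_power: "(a::nat) < 2 ^ W \<Longrightarrow> b < 2 ^ W \<Longrightarrow> Bit_Operations.xor a b < 2 ^ W"
  by (metis take_bit_nat_eq_self_iff take_bit_xor)

definition fits_registers :: "nat \<Rightarrow> nat \<Rightarrow> rle \<Rightarrow> bool" where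
  "fits_registers n W S \<longleftrightarrow> (\<forall>i<n. fst (S ! i) < 2 ^ W \<and> snd (S ! i) < 2 ^ W)"

lemma valid_rle_fits_registers:
  assumes "valid_rle W S" "length S = n"
  shows "fits_registers n W S"
  using assms unfolding valid_rle_def fits_registers_def by (fastforce dest: nth_mem)

definition query_perm :: "nat \<Rightarrow> nat \<Rightarrow> rle \<Rightarrow> nat \<Rightarrow> nat" where
  "query_perm n W S j = enc_basis n W (reg_i n W j)
     (Bit_Operations.xor (reg_c n W j) (fst (S ! reg_i n W j)))
     (Bit_Operations.xor (reg_r n W j) (snd (S ! reg_i n W j)))
     (reg_w n W j)"

lemma query_perm_properties:
  assumes "0 < n" "fits_registers n W S"
  shows reg_i_query_perm: "reg_i n W (query_perm n W S j) = reg_i n W j"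
    and query_perm_less_qdim: "j < qdim n W K \<Longrightarrow> query_perm n W S j < qdim n W K"
    and query_perm_query_perm: "query_perm n W S (query_perm n W S j) = j"
proof -
  have i: "reg_i n W j < n" using reg_less assms by auto
  then have "fst (S ! reg_i n W j) < 2 ^ W" "snd (S ! reg_i n W j) < 2 ^ W"
    using assms by (auto simp: fits_registers_def)
  then have x: "Bit_Operations.xor (reg_c n W j) (fst (S ! reg_i n W j)) < 2 ^ W"
     "Bit_Operations.xor (reg_r n W j) (snd (S ! reg_i n W j)) < 2 ^ W"
    using reg_less[OF assms(1)] xor_less_two_power by auto
  show "reg_i n W (query_perm n W S j) = reg_i n W j"
    unfolding query_perm_def using reg_enc_basis[OF i x] by simp
  show "j < qdim n W K \<Longrightarrow> query_perm n W S j < qdim n W K"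
    unfolding query_perm_def using enc_basis_less_qdim[OF i x] reg_less[OF assms(1)] by auto
  show "query_perm n W S (query_perm n W S j) = j"
    unfolding query_perm_def using reg_enc_basis[OF i x] enc_basis_reg[OF assms(1)]
    by (simp add: xor.assoc)
qed

lemma mat_apply_query_op:
  assumes "0 < n" "fits_registers n W S"
  shows "mat_apply (qdim n W K) (query_op n W K S) \<phi> j =
     (if j < qdim n W K then \<phi> (query_perm n W S j) else 0)"
proof (cases "j < qdim n W K")
  case True
  let ?D = "qdim n W K" and ?s = "query_perm n W S"
  have "(\<Sum>k<?D. query_op n W K S j k * \<phi> k) = (\<Sum>k<?D. if k = ?s j then \<phi> k else 0)"
  proof (rule sum.cong[OF refl])
    fix k assume "k \<in> {..<?D}"
    moreover have "j = ?s k \<longleftrightarrow> k = ?s j"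
      using query_perm_query_perm[OF assms] by metis
    ultimately show "query_op n W K S j k * \<phi> k = (if k = ?s j then \<phi> k else 0)"
      using True by (simp add: query_op_def query_perm_def[symmetric])
  qed
  then show ?thesis
    using True query_perm_less_qdim[OF assms True] by (simp add: mat_apply_def)
qed (simp add: mat_apply_def)

lemma sum_query_perm:
  assumes "0 < n" "fits_registers n W S"
  shows "(\<Sum>j<qdim n W K. g (query_perm n W S j)) = (\<Sum>j<qdim n W K. g j)"
  by (rule sum.reindex_bij_witness[where i="query_perm n W S" and j="query_perm n W S"])
     (use query_perm_properties[OF assms] in auto)

lemma inner_prod_query_op:
  fixes K :: nat
  assumes "0 < n" "fits_registers n W S"
  defines "D \<equiv> qdim n W K"
  shows "inner_prod D (mat_apply D (query_op n W K S) \<phi>) (mat_apply D (query_op n W K S) \<psi>)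
    = inner_prod D \<phi> \<psi>"
  using sum_query_perm[OF assms(1,2), of "\<lambda>j. cnj (\<phi> j) * \<psi> j" K]
  by (simp add: inner_prod_def D_def mat_apply_query_op[OF assms(1,2)])

lemma norm2_query_op:
  fixes K :: nat
  assumes "0 < n" "fits_registers n W S"
  defines "D \<equiv> qdim n W K"
  shows "norm2 D (mat_apply D (query_op n W K S) \<phi>) = norm2 D \<phi>"
  using inner_prod_query_op[OF assms(1,2), of K \<phi> \<phi>] by (simp add: D_def inner_prod_self)

definition block_weight :: "nat \<Rightarrow> nat \<Rightarrow> nat \<Rightarrow> nat \<Rightarrow> qstate \<Rightarrow> real" where
  "block_weight n W D i \<phi> = (\<Sum>j<D. if reg_i n W j = i then (cmod (\<phi> j))\<^sup>2 else 0)"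

lemma block_weight_query_op:
  fixes K :: nat
  assumes "0 < n" "fits_registers n W S"
  defines "D \<equiv> qdim n W K"
  shows "block_weight n W D i (mat_apply D (query_op n W K S) \<phi>) = block_weight n W D i \<phi>"
proof -
  let ?w = "\<lambda>j. if reg_i n W j = i then (cmod (\<phi> j))\<^sup>2 else 0"
  have "block_weight n W D i (mat_apply D (query_op n W K S) \<phi>) = (\<Sum>j<D. ?w (query_perm n W S j))"
    unfolding block_weight_def D_def
    by (rule sum.cong) (simp_all add: mat_apply_query_op[OF assms(1,2)] reg_i_query_perm[OF assms(1,2)])
  also have "\<dots> = block_weight n W D i \<phi>"
    unfolding block_weight_def D_def by (rule sum_query_perm[OF assms(1,2)])
  finally show ?thesis .
qed

lemma sum_block_weight_le_norm2:
  assumes "finite I"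
  shows "(\<Sum>i\<in>I. block_weight n W D i \<phi>) \<le> norm2 D \<phi>"
proof -
  have "(\<Sum>i\<in>I. block_weight n W D i \<phi>) = (\<Sum>j<D. if reg_i n W j \<in> I then (cmod (\<phi> j))\<^sup>2 else 0)"
    unfolding block_weight_def using assms by (subst sum.swap) (simp add: sum.delta)
  also have "\<dots> \<le> norm2 D \<phi>" unfolding norm2_def by (rule sum_mono) simp
  finally show ?thesis .
qed

lemma norm_cnj_mult_diff_le:
  fixes a b c :: complex
  shows "cmod (cnj a * b - cnj a * c) \<le> (cmod a)\<^sup>2 + ((cmod b)\<^sup>2 + (cmod c)\<^sup>2) / 2"
proof -
  have amgm: "cmod x * cmod y \<le> ((cmod x)\<^sup>2 + (cmod y)\<^sup>2) / 2" for x y :: complex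
    using sum_squares_bound[of "cmod x" "cmod y"] by (simp add: power2_eq_square)
  have halves: "(p + q) / 2 + (p + r) / 2 = p + (q + r) / 2" for p q r :: real
    by (simp add: field_simps)
  have "cmod (cnj a * b - cnj a * c) \<le> cmod a * cmod b + cmod a * cmod c"
    using norm_triangle_ineq4[of "cnj a * b" "cnj a * c"] by (simp add: norm_mult)
  also have "\<dots> \<le> ((cmod a)\<^sup>2 + (cmod b)\<^sup>2) / 2 + ((cmod a)\<^sup>2 + (cmod c)\<^sup>2) / 2"
    by (rule add_mono[OF amgm amgm])
  also have "\<dots> = (cmod a)\<^sup>2 + ((cmod b)\<^sup>2 + (cmod c)\<^sup>2) / 2"
    by (rule halves)
  finally show ?thesis .
qed

lemma inner_prod_diff_le_block_weight:
  assumes "\<And>j. j < D \<Longrightarrow> reg_i n W j \<noteq> i \<Longrightarrow> \<alpha> j = \<beta> j"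
  shows "cmod (inner_prod D \<chi> \<alpha> - inner_prod D \<chi> \<beta>)
    \<le> block_weight n W D i \<chi> + (block_weight n W D i \<alpha> + block_weight n W D i \<beta>) / 2"
proof -
  let ?w = "\<lambda>\<phi> j. if reg_i n W j = i then (cmod (\<phi> j))\<^sup>2 else 0"
  have "cmod (inner_prod D \<chi> \<alpha> - inner_prod D \<chi> \<beta>)
    = cmod (\<Sum>j<D. if reg_i n W j = i then cnj (\<chi> j) * \<alpha> j - cnj (\<chi> j) * \<beta> j else 0)"
    unfolding inner_prod_def sum_subtractf[symmetric]
    by (rule arg_cong[where f=cmod], rule sum.cong) (auto simp: assms)
  also have "\<dots> \<le> (\<Sum>j<D. ?w \<chi> j + (?w \<alpha> j + ?w \<beta> j) / 2)"
    by (rule order_trans[OF norm_sum sum_mono]) (simp add: norm_cnj_mult_diff_le)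
  also have "\<dots> = block_weight n W D i \<chi> + (block_weight n W D i \<alpha> + block_weight n W D i \<beta>) / 2"
    by (simp add: block_weight_def sum.distrib add_divide_distrib sum_divide_distrib[symmetric])
  finally show ?thesis .
qed

lemma inner_prod_query_op_change:
  fixes K :: nat
  assumes n: "0 < n" and S: "fits_registers n W S" and S': "fits_registers n W S'"
    and agree: "\<And>m. m < n \<Longrightarrow> m \<noteq> i \<Longrightarrow> S ! m = S' ! m"
  defines "D \<equiv> qdim n W K"
  shows "cmod (inner_prod D (mat_apply D (query_op n W K S) \<phi>) (mat_apply D (query_op n W K S') \<psi>)
      - inner_prod D \<phi> \<psi>)
    \<le> block_weight n W D i \<phi> + block_weight n W D i \<psi>"
proof -
  let ?O = "mat_apply D (query_op n W K S)" and ?O' = "mat_apply D (query_op n W K S')"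
  have off_block: "?O' \<psi> j = ?O \<psi> j" if "j < D" "reg_i n W j \<noteq> i" for j
  proof -
    have "reg_i n W j < n" using reg_less[OF n] by blast
    then have "query_perm n W S' j = query_perm n W S j"
      using agree that by (simp add: query_perm_def)
    then show ?thesis
      using that by (simp add: D_def mat_apply_query_op[OF n S] mat_apply_query_op[OF n S'])
  qed
  have "inner_prod D \<phi> \<psi> = inner_prod D (?O \<phi>) (?O \<psi>)"
    using inner_prod_query_op[OF n S] by (simp add: D_def)
  then have "cmod (inner_prod D (?O \<phi>) (?O' \<psi>) - inner_prod D \<phi> \<psi>)
    \<le> block_weight n W D i (?O \<phi>) + (block_weight n W D i (?O' \<psi>) + block_weight n W D i (?O \<psi>)) / 2"
    using inner_prod_diff_le_block_weight[of D n W i "?O' \<psi>" "?O \<psi>", OF off_block] by simp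
  also have "\<dots> = block_weight n W D i \<phi> + block_weight n W D i \<psi>"
    using block_weight_query_op[OF n S] block_weight_query_op[OF n S'] by (simp add: D_def)
  finally show ?thesis .
qed

section \<open>Runs of a query algorithm\<close>

lemma norm2_run_state:
  assumes n: "0 < n" and wf: "wf_qalg n W Q"
    and A: "fits_registers n W A" and B: "fits_registers n W B"
  shows "t \<le> alg_T Q \<Longrightarrow> norm2 (qdim n W (alg_ws Q)) (run_state n W Q A B t) = 1"
proof (induction t)
  case 0
  let ?D = "qdim n W (alg_ws Q)"
  have "0 < ?D" using n wf by (simp add: qdim_def wf_qalg_def)
  then have "norm2 ?D (\<lambda>j. if j = 0 then 1 else 0) = 1"
    by (simp add: norm2_def if_distrib[of "\<lambda>z. (cmod z)\<^sup>2"] cong: if_cong)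
  then show ?case using wf unitary_norm2 by (simp add: wf_qalg_def)
next
  case (Suc t)
  have "unitary (qdim n W (alg_ws Q)) (alg_U Q (Suc t))" using wf Suc.prems by (simp add: wf_qalg_def)
  moreover have "fits_registers n W (if alg_choice Q (Suc t) then A else B)" using A B by simp
  ultimately show ?case
    using Suc unitary_norm2 norm2_query_op[OF n] by (simp add: Let_def)
qed

lemma inner_prod_run_state_Suc:
  assumes n: "0 < n" and wf: "wf_qalg n W Q"
    and fits: "fits_registers n W A" "fits_registers n W B" "fits_registers n W A'" "fits_registers n W B'"
    and agree: "\<And>m. m < n \<Longrightarrow> m \<noteq> i \<Longrightarrow> A ! m = A' ! m \<and> B ! m = B' ! m"
    and t: "Suc t \<le> alg_T Q"
  defines "D \<equiv> qdim n W (alg_ws Q)"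
  shows "cmod (inner_prod D (run_state n W Q A B t) (run_state n W Q A' B' t))
      - block_weight n W D i (run_state n W Q A B t) - block_weight n W D i (run_state n W Q A' B' t)
    \<le> cmod (inner_prod D (run_state n W Q A B (Suc t)) (run_state n W Q A' B' (Suc t)))"
proof -
  let ?S = "if alg_choice Q (Suc t) then A else B" and ?S' = "if alg_choice Q (Suc t) then A' else B'"
  let ?\<phi> = "run_state n W Q A B t" and ?\<psi> = "run_state n W Q A' B' t"
  let ?q = "inner_prod D (mat_apply D (query_op n W (alg_ws Q) ?S) ?\<phi>)
                         (mat_apply D (query_op n W (alg_ws Q) ?S') ?\<psi>)"
  have "unitary D (alg_U Q (Suc t))" using wf t by (simp add: wf_qalg_def D_def)
  then have "inner_prod D (run_state n W Q A B (Suc t)) (run_state n W Q A' B' (Suc t)) = ?q"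
    using unitary_inner_prod by (simp add: Let_def D_def)
  moreover have "cmod (?q - inner_prod D ?\<phi> ?\<psi>) \<le> block_weight n W D i ?\<phi> + block_weight n W D i ?\<psi>"
    unfolding D_def using fits agree by (intro inner_prod_query_op_change[OF n]) auto
  moreover have "cmod (inner_prod D ?\<phi> ?\<psi>) \<le> cmod ?q + cmod (?q - inner_prod D ?\<phi> ?\<psi>)"
    using norm_triangle_ineq2[of "inner_prod D ?\<phi> ?\<psi>" ?q] by (simp add: norm_minus_commute)
  ultimately show ?thesis by simp
qed

lemma norm_inner_prod_le_if_separated:
  assumes a: "norm2 D a = 1" and b: "norm2 D b = 1"
    and a_in: "(\<Sum>j<D. if j \<in> G then (cmod (a j))\<^sup>2 else 0) \<ge> 2/3"
    and b_out: "(\<Sum>j<D. if j \<notin> G then (cmod (b j))\<^sup>2 else 0) \<ge> 2/3"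
  shows "cmod (inner_prod D a b) \<le> 17/18"
proof -
  let ?x = "\<lambda>j. (cmod (a j))\<^sup>2" and ?y = "\<lambda>j. (cmod (b j))\<^sup>2"
  have "cmod (inner_prod D a b) \<le> (\<Sum>j<D. cmod (a j) * cmod (b j))"
    unfolding inner_prod_def using norm_sum[of "\<lambda>j. cnj (a j) * b j" "{..<D}"] by (simp add: norm_mult)
  also have "\<dots> \<le> (\<Sum>j<D. 3/4 * ?x j + 3/4 * ?y j - 5/12 * (if j \<in> G then ?x j else 0)
        - 5/12 * (if j \<notin> G then ?y j else 0))"
  proof (rule sum_mono)
    fix j
    \<comment> \<open>weighted AM-GM \<open>uv \<le> u\<^sup>2/3 + 3v\<^sup>2/4\<close>, the roles of \<open>a j\<close> and \<open>b j\<close> depending on \<open>j \<in> G\<close>\<close>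
    have "0 \<le> (cmod (a j) - 3/2 * cmod (b j))\<^sup>2" "0 \<le> (cmod (b j) - 3/2 * cmod (a j))\<^sup>2" by simp_all
    then show "cmod (a j) * cmod (b j) \<le> 3/4 * ?x j + 3/4 * ?y j - 5/12 * (if j \<in> G then ?x j else 0)
        - 5/12 * (if j \<notin> G then ?y j else 0)"
      by (cases "j \<in> G") (simp_all add: power2_diff power2_eq_square algebra_simps)
  qed
  also have "\<dots> = 3/4 * norm2 D a + 3/4 * norm2 D b - 5/12 * (\<Sum>j<D. if j \<in> G then ?x j else 0)
        - 5/12 * (\<Sum>j<D. if j \<notin> G then ?y j else 0)"
    by (simp add: norm2_def sum.distrib sum_subtractf sum_distrib_left)
  also have "\<dots> \<le> 17/18" using a b a_in b_out by linarith
  finally show ?thesis .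
qed

lemma norm_inner_prod_final_states_le:
  assumes n: "0 < n" and wf: "wf_qalg n W Q"
    and fits: "fits_registers n W A" "fits_registers n W B" "fits_registers n W A'" "fits_registers n W B'"
    and disjoint: "el_lcs_answers A B \<inter> el_lcs_answers A' B' = {}"
    and succ: "success_prob n W Q A B \<ge> 2/3" "success_prob n W Q A' B' \<ge> 2/3"
  defines "D \<equiv> qdim n W (alg_ws Q)"
  shows "cmod (inner_prod D (run_state n W Q A B (alg_T Q)) (run_state n W Q A' B' (alg_T Q))) \<le> 17/18"
proof (rule norm_inner_prod_le_if_separated)
  let ?G = "{j. alg_out Q j \<in> el_lcs_answers A B}"
  let ?\<psi>' = "run_state n W Q A' B' (alg_T Q)"
  show "norm2 D (run_state n W Q A B (alg_T Q)) = 1" "norm2 D ?\<psi>' = 1"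
    unfolding D_def using norm2_run_state[OF n wf] fits by auto
  show "(\<Sum>j<D. if j \<in> ?G then (cmod (run_state n W Q A B (alg_T Q) j))\<^sup>2 else 0) \<ge> 2/3"
    using succ(1) by (simp add: success_prob_def D_def)
  have "success_prob n W Q A' B' \<le> (\<Sum>j<D. if j \<notin> ?G then (cmod (?\<psi>' j))\<^sup>2 else 0)"
    unfolding success_prob_def D_def using disjoint by (intro sum_mono) auto
  then show "(\<Sum>j<D. if j \<notin> ?G then (cmod (?\<psi>' j))\<^sup>2 else 0) \<ge> 2/3"
    using succ(2) by linarith
qed

section \<open>The adversary bound\<close>

lemma sum_block_weight_fibres_le:
  assumes R: "finite R" "\<pi> ` R \<subseteq> X" "finite X"
    and inj: "\<And>x. inj_on idx {p \<in> R. \<pi> p = x}"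
    and norm: "\<And>x. x \<in> X \<Longrightarrow> norm2 D (\<phi> x) = 1"
  shows "(\<Sum>p\<in>R. block_weight n W D (idx p) (\<phi> (\<pi> p))) \<le> card X"
proof -
  have "(\<Sum>p\<in>R. block_weight n W D (idx p) (\<phi> (\<pi> p)))
      = (\<Sum>x\<in>X. \<Sum>p\<in>{p \<in> R. \<pi> p = x}. block_weight n W D (idx p) (\<phi> x))"
    using sum.group[OF R(1,3,2), of "\<lambda>p. block_weight n W D (idx p) (\<phi> (\<pi> p))"] by simp
  also have "\<dots> = (\<Sum>x\<in>X. \<Sum>i\<in>idx ` {p \<in> R. \<pi> p = x}. block_weight n W D i (\<phi> x))"
    using inj by (simp add: sum.reindex)
  also have "\<dots> \<le> (\<Sum>x\<in>X. norm2 D (\<phi> x))"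
    using R(1) by (intro sum_mono sum_block_weight_le_norm2) simp
  also have "\<dots> = card X" using norm by simp
  finally show ?thesis .
qed

theorem adversary_bound:
  fixes A B :: "'a \<Rightarrow> rle" and R :: "('a \<times> 'a) set" and idx :: "'a \<times> 'a \<Rightarrow> nat"
  assumes n: "0 < n" and wf: "wf_qalg n W Q"
    and R: "R \<subseteq> X \<times> Y" "finite X" "finite Y"
    and fits: "\<And>x. x \<in> X \<union> Y \<Longrightarrow> fits_registers n W (A x) \<and> fits_registers n W (B x)"
    and agree: "\<And>p m. p \<in> R \<Longrightarrow> m < n \<Longrightarrow> m \<noteq> idx p \<Longrightarrow>
      A (fst p) ! m = A (snd p) ! m \<and> B (fst p) ! m = B (snd p) ! m"
    and inj: "\<And>x. inj_on idx {p \<in> R. fst p = x}" "\<And>y. inj_on idx {p \<in> R. snd p = y}"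
    and disjoint: "\<And>p. p \<in> R \<Longrightarrow>
      el_lcs_answers (A (fst p)) (B (fst p)) \<inter> el_lcs_answers (A (snd p)) (B (snd p)) = {}"
    and succ: "\<And>x. x \<in> X \<union> Y \<Longrightarrow> success_prob n W Q (A x) (B x) \<ge> 2/3"
  shows "real (card R) \<le> 18 * real (alg_T Q) * (card X + card Y)"
proof -
  define T where "T = alg_T Q"
  define D where "D = qdim n W (alg_ws Q)"
  define \<psi> where "\<psi> x t = run_state n W Q (A x) (B x) t" for x t
  define F where "F t = (\<Sum>p\<in>R. cmod (inner_prod D (\<psi> (fst p) t) (\<psi> (snd p) t)))" for t
  have fin: "finite R" using R finite_subset by blast
  have in_XY: "fst p \<in> X" "snd p \<in> Y" if "p \<in> R" for p using R that by auto
  have norm: "norm2 D (\<psi> x t) = 1" if "x \<in> X \<union> Y" "t \<le> T" for x t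
    using norm2_run_state[OF n wf] fits that by (simp add: \<psi>_def D_def T_def)
  have F0: "F 0 = card R"
  proof -
    have "cmod (inner_prod D (\<psi> (fst p) 0) (\<psi> (snd p) 0)) = 1" if "p \<in> R" for p
    proof -
      have "\<psi> (snd p) 0 = \<psi> (fst p) 0" by (simp add: \<psi>_def)
      then show ?thesis using norm[of "fst p" 0] in_XY that by (simp add: inner_prod_self)
    qed
    then show ?thesis by (simp add: F_def)
  qed
  have F_step: "F t - (card X + card Y) \<le> F (Suc t)" if t: "Suc t \<le> T" for t
  proof -
    have "F t - (\<Sum>p\<in>R. block_weight n W D (idx p) (\<psi> (fst p) t))
        - (\<Sum>p\<in>R. block_weight n W D (idx p) (\<psi> (snd p) t)) \<le> F (Suc t)"
      unfolding F_def sum_subtractf[symmetric] \<psi>_def D_def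
      using t fits in_XY agree by (intro sum_mono inner_prod_run_state_Suc[OF n wf]) (auto simp: T_def)
    moreover have "(\<Sum>p\<in>R. block_weight n W D (idx p) (\<psi> (fst p) t)) \<le> card X"
      using R in_XY inj(1) norm t by (intro sum_block_weight_fibres_le[OF fin]) auto
    moreover have "(\<Sum>p\<in>R. block_weight n W D (idx p) (\<psi> (snd p) t)) \<le> card Y"
      using R in_XY inj(2) norm t by (intro sum_block_weight_fibres_le[OF fin]) auto
    ultimately show ?thesis by linarith
  qed
  have F_decay: "real (card R) - real t * (card X + card Y) \<le> F t" if "t \<le> T" for t
    using that
  proof (induction t)
    case (Suc t)
    then show ?case using F_step[OF Suc.prems] by (simp add: algebra_simps)
  qed (simp add: F0)
  have "F T \<le> (\<Sum>p\<in>R. 17/18)"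
    unfolding F_def \<psi>_def D_def T_def
    using fits in_XY disjoint succ
    by (intro sum_mono norm_inner_prod_final_states_le[OF n wf]) auto
  then show ?thesis using F_decay[of T] by (simp add: T_def)
qed

section \<open>Longest common substrings\<close>

lemma sublist_append_disjointD:
  assumes "sublist w (xs @ ys)" "set w \<inter> set ys = {}" "w \<noteq> []"
  shows "sublist w xs"
  using assms
proof (induction ys rule: rev_induct)
  case (snoc y ys)
  have "y \<in> set w" if "suffix w ((xs @ ys) @ [y])"
    using that \<open>w \<noteq> []\<close> by (auto simp: suffix_def append_eq_append_conv2 Cons_eq_append_conv)
  then show ?case using snoc by (auto simp: sublist_snoc[of w "xs @ ys" y, simplified])
qed simp

lemma sublist_append_Cons_notinD:
  assumes "sublist w (xs @ s # ys)" "s \<notin> set w"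
  shows "sublist w xs \<or> sublist w ys"
  using assms
proof (induction xs)
  case Nil
  then show ?case by (auto simp: sublist_Cons_right prefix_Cons)
next
  case (Cons x xs)
  have "prefix w (x # xs)" if "prefix w (x # xs @ s # ys)"
    using that Cons.prems(2) prefix_append[of w "x # xs" "s # ys"] by (auto simp: prefix_Cons)
  then show ?case
    using Cons by (auto simp: sublist_Cons_right intro: prefix_imp_sublist)
qed

lemma sublist_run_separator_cases:
  assumes w: "sublist w (replicate L c @ s # X @ R)" "w \<noteq> []"
    and s: "s \<notin> set w" and R: "set w \<inter> set R = {}"
  shows "(w = replicate (length w) c \<and> length w \<le> L) \<or> sublist w X"
  using sublist_append_Cons_notinD[OF w(1) s]
proof
  assume run: "sublist w (replicate L c)"
  then have "set w \<subseteq> {c}" using set_mono_sublist by fastforce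
  then have "w = replicate (length w) c" by (simp add: replicate_length_same subset_iff)
  then show ?thesis using sublist_length_le[OF run] by simp
next
  assume "sublist w (X @ R)"
  then show ?thesis using sublist_append_disjointD R w(2) by blast
qed

lemma is_LCSubstr_run_separator:
  assumes a: "a = replicate L c @ s # X @ RA" and b: "b = replicate L c @ s' # X @ RB"
    and s: "s \<notin> set b" and RA: "set RA \<inter> set b = {}"
    and lcs: "is_LCSubstr a b w"
  shows is_LCSubstr_run: "length X < L \<Longrightarrow> w = replicate L c"
    and is_LCSubstr_middle: "L < length X \<Longrightarrow> w = X"
proof -
  have "sublist (replicate L c) a" "sublist (replicate L c) b" "sublist X a" "sublist X b"
    using a b by (auto intro: sublist_appendI[of X "_ @ [_]", simplified])
  then have long: "L \<le> length w" "length X \<le> length w"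
    using lcs by (auto simp: is_LCSubstr_def)
  have "set w \<subseteq> set b" using lcs set_mono_sublist by (auto simp: is_LCSubstr_def)
  then have cases: "(w = replicate (length w) c \<and> length w \<le> L) \<or> sublist w X" if "w \<noteq> []"
    using sublist_run_separator_cases[of w L c s X RA] lcs a s RA that
    by (auto simp: is_LCSubstr_def)
  show "w = replicate L c" if "length X < L"
  proof -
    have "\<not> sublist w X" using sublist_length_le long that by fastforce
    then show ?thesis using cases long that by fastforce
  qed
  show "w = X" if "L < length X"
  proof -
    have "sublist w X" using cases long that by fastforce
    then show ?thesis using long by (auto simp: sublist_def)
  qed
qed

section \<open>Hard instances\<close>

text \<open>Run \<open>i\<close> of the instance for \<open>z\<close> (\<open>d = 0\<close> for the first string, \<open>d = 1\<close> for the second): run 0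
  consists of \<open>L\<close> letters \<open>2\<close>, run 1 is the separator \<open>3\<close> resp. \<open>5\<close>, runs \<open>2\<close> to \<open>p + 1\<close> alternate
  between the letters \<open>0\<close> and \<open>1\<close> and have length 3 exactly for \<open>i \<in> z\<close>, and the remaining runs
  are single padding letters, even in the first string and odd in the second.\<close>

definition hard_char :: "nat \<Rightarrow> nat \<Rightarrow> nat \<Rightarrow> nat" where
  "hard_char d p i =
     (if i = 0 then 2 else if i = 1 then 3 + 2 * d else if i < p + 2 then i mod 2 else 2 * i + 4 + d)"

definition hard_run :: "nat \<Rightarrow> nat set \<Rightarrow> nat \<Rightarrow> nat" where
  "hard_run L z i = (if i = 0 then L else if i \<in> z then 3 else 1)"

definition hard_rle :: "nat \<Rightarrow> nat \<Rightarrow> nat \<Rightarrow> nat set \<Rightarrow> nat \<Rightarrow> rle" where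
  "hard_rle d p L z n = map (\<lambda>i. (hard_char d p i, hard_run L z i)) [0..<n]"

definition hard_middle :: "nat \<Rightarrow> nat set \<Rightarrow> nat list" where
  "hard_middle p z = concat (map (\<lambda>i. replicate (if i \<in> z then 3 else 1) (i mod 2)) [2..<p + 2])"

lemma upt_split: "i \<le> j \<Longrightarrow> j \<le> k \<Longrightarrow> [i..<k] = [i..<j] @ [j..<k]"
  using upt_add_eq_append[of i j "k - j"] by simp

lemma decode_hard_rle:
  assumes "p + 2 \<le> n" "z \<subseteq> {2..<p + 2}"
  shows "decode (hard_rle d p L z n) =
    replicate L 2 @ (3 + 2 * d) # hard_middle p z @ map (\<lambda>i. 2 * i + 4 + d) [p + 2..<n]"
proof -
  let ?f = "\<lambda>i. replicate (hard_run L z i) (hard_char d p i)"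
  have "[0..<n] = [0, 1] @ [2..<p + 2] @ [p + 2..<n]"
    using assms(1) upt_split[of 0 2 n] upt_split[of 2 "p + 2" n] by (simp add: upt_rec)
  then have pieces: "decode (hard_rle d p L z n)
      = ?f 0 @ ?f 1 @ concat (map ?f [2..<p + 2]) @ concat (map ?f [p + 2..<n])"
    by (simp add: decode_def hard_rle_def comp_def)
  have middle: "map ?f [2..<p + 2] = map (\<lambda>i. replicate (if i \<in> z then 3 else 1) (i mod 2)) [2..<p + 2]"
    by (simp add: hard_run_def hard_char_def)
  have tail: "map ?f [p + 2..<n] = map (\<lambda>i. [2 * i + 4 + d]) [p + 2..<n]"
    using assms(2) by (auto simp: hard_run_def hard_char_def)
  have ends: "?f 0 = replicate L 2" "?f 1 = [3 + 2 * d]"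
    using assms(2) by (auto simp: hard_run_def hard_char_def)
  show ?thesis
    unfolding pieces middle tail ends hard_middle_def by (simp del: upt_Suc)
qed

lemma length_hard_middle:
  assumes "z \<subseteq> {2..<p + 2}"
  shows "length (hard_middle p z) = p + 2 * card z"
proof -
  define I where "I = {2..<p + 2}"
  have I: "finite I" "card I = p" "z \<subseteq> I" using assms by (simp_all add: I_def)
  have "length (hard_middle p z) = sum_list (map (\<lambda>i. if i \<in> z then 3 else 1) [2..<p + 2])"
    by (simp add: hard_middle_def length_concat comp_def)
  also have "\<dots> = (\<Sum>i\<in>I. if i \<in> z then 3 else 1)"
    unfolding I_def by (simp only: sum_list_distinct_conv_sum_set distinct_upt set_upt)
  also have "\<dots> = (\<Sum>i\<in>I. 1 + (if i \<in> z then 2 else 0))"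
    by (rule sum.cong) auto
  also have "\<dots> = card I + (\<Sum>i\<in>I \<inter> z. 2)"
    using sum.inter_restrict[OF I(1), of "\<lambda>_. 2::nat" z] by (simp only: sum.distrib card_eq_sum)
  also have "\<dots> = p + 2 * card z"
    using I by (simp add: Int_absorb1)
  finally show ?thesis .
qed

lemma set_hard_middle: "set (hard_middle p z) \<subseteq> {0, 1}"
  by (auto simp: hard_middle_def)

lemma enc_length_hard_middle:
  assumes "2 \<le> p"
  shows "enc_length (hard_middle p z) \<noteq> 1"
proof
  assume "enc_length (hard_middle p z) = 1"
  then obtain c where "remdups_adj (hard_middle p z) = [c]"
    unfolding enc_length_def by (metis length_0_conv length_Suc_conv One_nat_def)
  then have "set (hard_middle p z) = {c}" by (metis remdups_adj_set list.set(1) list.set(2))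
  moreover have "0 \<in> set (hard_middle p z)" "1 \<in> set (hard_middle p z)"
    using assms unfolding hard_middle_def set_concat set_map set_upt image_image
    by (auto intro: bexI[of _ "2::nat"] bexI[of _ "3::nat"])
  ultimately show False by simp
qed

lemma valid_hard_rle:
  assumes "d \<le> 1" "0 < L" "L < 2 ^ W" "2 * n + 6 \<le> 2 ^ W"
  shows "valid_rle W (hard_rle d p L z n)"
  unfolding valid_rle_def
proof (intro conjI allI impI ballI)
  fix x assume "x \<in> set (hard_rle d p L z n)"
  then obtain i where i: "i < n" "x = (hard_char d p i, hard_run L z i)" by (auto simp: hard_rle_def)
  then have "hard_char d p i < 2 ^ W" using assms by (auto simp: hard_char_def)
  moreover have "0 < hard_run L z i \<and> hard_run L z i < 2 ^ W" using assms by (auto simp: hard_run_def)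
  ultimately show "case x of (c, r) \<Rightarrow> c < 2 ^ W \<and> 0 < r \<and> r < 2 ^ W" using i by simp
next
  fix i assume "Suc i < length (hard_rle d p L z n)"
  moreover have "i mod 2 \<noteq> Suc i mod 2" by presburger
  ultimately show "fst (hard_rle d p L z n ! i) \<noteq> fst (hard_rle d p L z n ! Suc i)"
    using assms(1) by (auto simp: hard_rle_def hard_char_def)
qed

lemma hard_rle_nth_insert:
  "m < n \<Longrightarrow> m \<noteq> i \<Longrightarrow> hard_rle d p L (insert i z) n ! m = hard_rle d p L z n ! m"
  by (simp add: hard_rle_def hard_run_def)

lemma el_lcs_answers_hard_rle:
  assumes "p + 2 \<le> n" "z \<subseteq> {2..<p + 2}"
  shows el_lcs_answers_hard_rle_short: "length (hard_middle p z) < L \<Longrightarrow>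
      el_lcs_answers (hard_rle 0 p L z n) (hard_rle 1 p L z n) \<subseteq> {1}"
    and el_lcs_answers_hard_rle_long: "L < length (hard_middle p z) \<Longrightarrow>
      el_lcs_answers (hard_rle 0 p L z n) (hard_rle 1 p L z n) \<subseteq> {enc_length (hard_middle p z)}"
proof -
  let ?a = "decode (hard_rle 0 p L z n)" and ?b = "decode (hard_rle 1 p L z n)"
  let ?RA = "map (\<lambda>i. 2 * i + 4) [p + 2..<n]" and ?RB = "map (\<lambda>i. 2 * i + 5) [p + 2..<n]"
  have a: "?a = replicate L 2 @ 3 # hard_middle p z @ ?RA"
    and b: "?b = replicate L 2 @ 5 # hard_middle p z @ ?RB"
    using decode_hard_rle[OF assms, of 0 L] decode_hard_rle[OF assms, of 1 L] by simp_all
  have "set ?b \<subseteq> {0, 1, 2, 5} \<union> {c. odd c \<and> 9 \<le> c}"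
    unfolding b using set_hard_middle[of p z] by auto
  then have sep: "3 \<notin> set ?b" and RA: "set ?RA \<inter> set ?b = {}"
    using assms(1) by auto
  show "el_lcs_answers (hard_rle 0 p L z n) (hard_rle 1 p L z n) \<subseteq> {1}"
    if "length (hard_middle p z) < L"
  proof
    fix e assume "e \<in> el_lcs_answers (hard_rle 0 p L z n) (hard_rle 1 p L z n)"
    then obtain w where "e = enc_length w" "is_LCSubstr ?a ?b w" by (auto simp: el_lcs_answers_def)
    moreover from this have "w = replicate L 2" using is_LCSubstr_run[OF a b sep RA] that by blast
    ultimately show "e \<in> {1}"
      using that by (simp add: enc_length_def remdups_adj_replicate)
  qed
  show "el_lcs_answers (hard_rle 0 p L z n) (hard_rle 1 p L z n) \<subseteq> {enc_length (hard_middle p z)}"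
    if "L < length (hard_middle p z)"
    using is_LCSubstr_middle[OF a b sep RA] that by (auto simp: el_lcs_answers_def)
qed

definition extension_pairs :: "'a set \<Rightarrow> nat \<Rightarrow> ('a set \<times> 'a set) set" where
  "extension_pairs I k = {(z, insert i z) | z i. z \<subseteq> I \<and> card z = k \<and> i \<in> I - z}"

definition added_point :: "'a set \<times> 'a set \<Rightarrow> 'a" where
  "added_point p = the_elem (snd p - fst p)"

lemma extension_pairs_added_point:
  assumes "p \<in> extension_pairs I k"
  shows "snd p = insert (added_point p) (fst p)" and "fst p = snd p - {added_point p}"
proof -
  obtain z i where "p = (z, insert i z)" "i \<notin> z" using assms by (auto simp: extension_pairs_def)
  moreover from this have "snd p - fst p = {i}" by auto
  ultimately show "snd p = insert (added_point p) (fst p)" "fst p = snd p - {added_point p}"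
    by (simp_all add: added_point_def)
qed

lemma inj_on_added_point_fst: "inj_on added_point {p \<in> extension_pairs I k. fst p = x}"
proof (rule inj_onI)
  fix p q assume "p \<in> {p \<in> extension_pairs I k. fst p = x}" "q \<in> {p \<in> extension_pairs I k. fst p = x}"
    and "added_point p = added_point q"
  then show "p = q" using extension_pairs_added_point(1)[of _ I k] by (simp add: prod_eq_iff)
qed

lemma inj_on_added_point_snd: "inj_on added_point {p \<in> extension_pairs I k. snd p = y}"
proof (rule inj_onI)
  fix p q assume "p \<in> {p \<in> extension_pairs I k. snd p = y}" "q \<in> {p \<in> extension_pairs I k. snd p = y}"
    and "added_point p = added_point q"
  then show "p = q" using extension_pairs_added_point(2)[of _ I k] by (simp add: prod_eq_iff)
qed

lemma extension_pairs_subset: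
  assumes "finite I"
  shows "extension_pairs I k \<subseteq> {z. z \<subseteq> I \<and> card z = k} \<times> {y. y \<subseteq> I \<and> card y = Suc k}"
  using assms by (auto simp: extension_pairs_def finite_subset)

lemma card_extension_pairs:
  assumes "finite I"
  shows "card (extension_pairs I k) = (card I choose k) * (card I - k)"
proof -
  let ?Z = "{z. z \<subseteq> I \<and> card z = k}"
  have "extension_pairs I k = (\<lambda>(z, i). (z, insert i z)) ` Sigma ?Z (\<lambda>z. I - z)"
    by (auto simp: extension_pairs_def)
  moreover have "inj_on (\<lambda>(z, i). (z, insert i z)) (Sigma ?Z (\<lambda>z. I - z))"
    by (auto intro!: inj_onI)
  moreover have "card (I - z) = card I - k" if "z \<in> ?Z" for z
    using that assms by (auto simp: card_Diff_subset finite_subset)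
  ultimately show ?thesis
    using assms by (simp add: card_image card_SigmaI n_subsets)
qed

lemma card_extension_pairs_middle:
  assumes "finite I" "card I = 2 * k + 1"
  shows "2 * card (extension_pairs I k)
    = (k + 1) * (card {z. z \<subseteq> I \<and> card z = k} + card {y. y \<subseteq> I \<and> card y = Suc k})"
  using assms binomial_symmetric[of "Suc k" "2 * k + 1"] by (simp add: card_extension_pairs n_subsets)

lemma hard_rle_answers_disjoint:
  assumes "2 \<le> p" "p + 2 \<le> n" "(z, y) \<in> extension_pairs {2..<p + 2} k"
    and "p + 2 * k < L" "L < p + 2 * Suc k"
  shows "el_lcs_answers (hard_rle 0 p L z n) (hard_rle 1 p L z n)
    \<inter> el_lcs_answers (hard_rle 0 p L y n) (hard_rle 1 p L y n) = {}"
proof -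
  have zy: "z \<subseteq> {2..<p + 2}" "card z = k" "y \<subseteq> {2..<p + 2}" "card y = Suc k"
    using extension_pairs_subset[of "{2..<p + 2}" k] assms(3) by auto
  then have "length (hard_middle p z) < L" "L < length (hard_middle p y)"
    using length_hard_middle assms(4,5) by simp_all
  then show ?thesis
    using el_lcs_answers_hard_rle_short[OF assms(2) zy(1)]
      el_lcs_answers_hard_rle_long[OF assms(2) zy(3)] enc_length_hard_middle[OF assms(1)]
    by blast
qed

lemma query_lower_bound:
  assumes n: "6 \<le> n" and W: "2 * n + 6 \<le> W" and sol: "solves_EL_LCS_RLE n W Q"
  shows "real n / 144 \<le> real (alg_T Q)"
proof -
  define k where "k = (n - 4) div 2"
  define p where "p = 2 * k + 1"
  define L where "L = 4 * k + 2"
  define I where "I = {2..<p + 2}"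
  define A where "A z = hard_rle 0 p L z n" for z
  define B where "B z = hard_rle 1 p L z n" for z
  define X where "X = {z. z \<subseteq> I \<and> card z = k}"
  define Y where "Y = {y. y \<subseteq> I \<and> card y = Suc k}"
  have k: "2 \<le> p" "p + 2 \<le> n" "n \<le> 4 * (k + 1)"
    using n by (simp_all add: k_def p_def)
  have "2 * n + 6 \<le> 2 ^ W" using W less_exp[of W] by linarith
  then have valid: "valid_rle W (A z) \<and> valid_rle W (B z)" for z
    unfolding A_def B_def using k by (intro conjI valid_hard_rle) (simp_all add: L_def p_def)
  have len: "length (A z) = n" "length (B z) = n" for z
    by (simp_all add: A_def B_def hard_rle_def)
  have I: "finite I" "card I = p" by (simp_all add: I_def)
  have bound: "real (card (extension_pairs I k)) \<le> 18 * real (alg_T Q) * (card X + card Y)"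
  proof (rule adversary_bound[where A = A and B = B and idx = added_point])
    show "wf_qalg n W Q" using sol by (simp add: solves_EL_LCS_RLE_def)
    show "success_prob n W Q (A z) (B z) \<ge> 2/3" for z
      using sol valid len by (simp add: solves_EL_LCS_RLE_def)
    show "fits_registers n W (A z) \<and> fits_registers n W (B z)" for z
      using valid len valid_rle_fits_registers by blast
    show "A (fst q) ! m = A (snd q) ! m \<and> B (fst q) ! m = B (snd q) ! m"
      if "q \<in> extension_pairs I k" "m < n" "m \<noteq> added_point q" for q m
      using that extension_pairs_added_point(1)[OF that(1)] hard_rle_nth_insert
      by (simp add: A_def B_def)
    show "el_lcs_answers (A (fst q)) (B (fst q)) \<inter> el_lcs_answers (A (snd q)) (B (snd q)) = {}"
      if "q \<in> extension_pairs I k" for q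
      using that hard_rle_answers_disjoint[OF k(1,2), of "fst q" "snd q" k L]
      by (simp add: A_def B_def I_def L_def p_def)
  qed (use n I in \<open>simp_all add: X_def Y_def extension_pairs_subset
        inj_on_added_point_fst inj_on_added_point_snd\<close>)
  have "2 * card (extension_pairs I k) = (k + 1) * (card X + card Y)"
    using I card_extension_pairs_middle by (simp add: X_def Y_def p_def)
  then have "2 * real (card (extension_pairs I k)) = real (k + 1) * (card X + card Y)"
    by (metis of_nat_add of_nat_mult of_nat_numeral)
  with bound have "real (k + 1) * (card X + card Y) \<le> (36 * real (alg_T Q)) * (card X + card Y)"
    by (simp add: algebra_simps)
  moreover have "0 < card X" using I by (simp add: X_def n_subsets p_def)
  ultimately have "real (k + 1) \<le> 36 * real (alg_T Q)" by simp
  moreover have "real n \<le> 4 * real (k + 1)" using k(3) by simp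
  ultimately show ?thesis by simp
qed

theorem lemma8:
  shows "\<exists>c > (0::real). \<exists>k::nat. \<exists>N::nat. \<forall>n \<ge> N. \<exists>W0::nat. \<forall>W \<ge> W0. \<forall>Q.
           solves_EL_LCS_RLE n W Q \<longrightarrow> c * real n / (ln (real n)) ^ k \<le> real (alg_T Q)"
proof -
  have "\<forall>n \<ge> 6. \<exists>W0::nat. \<forall>W \<ge> W0. \<forall>Q.
      solves_EL_LCS_RLE n W Q \<longrightarrow> 1/144 * real n / (ln (real n)) ^ 0 \<le> real (alg_T Q)"
  proof (intro allI impI)
    fix n :: nat
    assume "6 \<le> n"
    then show "\<exists>W0::nat. \<forall>W \<ge> W0. \<forall>Q.
        solves_EL_LCS_RLE n W Q \<longrightarrow> 1/144 * real n / (ln (real n)) ^ 0 \<le> real (alg_T Q)"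
      using query_lower_bound by (intro exI[of _ "2 * n + 6"]) auto
  qed
  then show ?thesis by (intro exI[of _ "1/144"] conjI) (simp, blast)
qed

end
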